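(* Let $j_0\geq 0$ be a real number and $n\in\mathbb{N}$. Consider the directed graph with initial node $(0,j_0)$ in which, from each node $(m,j_m)$ with $0\leq m<n$, there are exactly two edges: one "up" edge to $(m+1,j_m+1)$ and one "down" edge to $(m+1,\max(j_m-1,0))$. For real $j$ and integer $k$, let $\Lambda^{j_0}_{j,k,n}$ denote the number of paths from $(0,j_0)$ to the node $(n,j)$ that have exactly $k$ up jumps. Then \[ \Lambda^{j_0}_{j,k,n} = \begin{cases} \binom{n}{k}, &\text{if } j=j_0+2k-n \text{ and } n-\lfloor j_0\rfloor\leq k\leq n,\\[1mm] \binom{n}{k}-\binom{n}{k+\lfloor j_0\rfloor+1}, &\text{if } j=j_0+2k-n \text{ and } n-\lfloor\frac{n+j_0}{2}\rfloor\leq k\leq n-\lfloor j_0\rfloor-1,\\[1mm] \binom{n}{k-j}-\binom{n}{k-j-1}, &\text{if } 0\leq j\leq n-\lfloor j_0\rfloor-1 \text{ (with } j \text{ an integer) and } j\leq k\leq \lfloor\frac{n-\lfloor j_0\rfloor-1+j}{2}\rfloor, \end{cases} \] and all other values of $\Lambda^{j_0}_{j,k,n}$ are zero.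
   Context: $\lfloor x\rfloor$ denotes the integer part of $x$. Binomial coefficients $\binom{n}{i}$ are taken to be $0$ when $i<0$ or $i>n$. *)

theory Defs
  imports Complex_Main
begin

definition walk_step :: "real \<Rightarrow> bool \<Rightarrow> real" where
  "walk_step j b = (if b then j + 1 else max (j - 1) 0)"

definition walk_end :: "real \<Rightarrow> bool list \<Rightarrow> real" where
  "walk_end j0 bs = foldl walk_step j0 bs"

text \<open>Paths from (0,j0) to (n,j) are exactly the jump sequences of length n whose
  endpoint is j; Lambda counts those with exactly k up jumps.\<close>
definition Lambda :: "real \<Rightarrow> real \<Rightarrow> int \<Rightarrow> nat \<Rightarrow> nat" where
  "Lambda j0 j k n = card {bs :: bool list. length bs = n \<and>
      int (length (filter id bs)) = k \<and> walk_end j0 bs = j}"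

definition zbinom :: "nat \<Rightarrow> int \<Rightarrow> int" where
  "zbinom n i = (if i < 0 then 0 else int (n choose nat i))"

end

theory Submission
  imports Defs
begin

text \<open>A walk that never takes a reflected down step (one from a height below 1) is an
  ordinary \<open>\<plusminus>1\<close> walk ending at \<open>j0 + 2k - n\<close>; by the reflection principle, those that stay
  above the barrier number \<open>C(n,k) - C(n,k+\<lfloor>j0\<rfloor>+1)\<close>. A walk reflected at least once is at
  integer heights from then on, and those ending at \<open>j\<close> number \<open>C(n,k-j) - C(n,k-j-1)\<close>.
  Instead of building the bijections, the sum of these two counts is checked against the
  recurrence obtained by splitting off the first step; each part obeys Pascal's rule.\<close>

lemma zbinom_Suc: "zbinom (Suc n) k = zbinom n (k - 1) + zbinom n k"
proof (cases "k \<le> 0")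
  case True
  then show ?thesis by (auto simp: zbinom_def)
next
  case False
  then have "nat k = Suc (nat (k - 1))" by simp
  with False show ?thesis unfolding zbinom_def by simp
qed

lemma zbinom_eq_0: "k < 0 \<or> int n < k \<Longrightarrow> zbinom n k = 0"
  unfolding zbinom_def by auto

lemma zbinom_0: "zbinom 0 k = (if k = 0 then 1 else 0)"
  unfolding zbinom_def by auto

lemma zbinom_symmetric: "zbinom n (int n - k) = zbinom n k"
proof (cases "0 \<le> k \<and> k \<le> int n")
  case True
  then obtain i where "k = int i" "i \<le> n" by (metis nonneg_int_cases of_nat_le_iff)
  then show ?thesis
    unfolding zbinom_def by (simp add: binomial_symmetric[of i n] flip: of_nat_diff)
qed (auto simp: zbinom_def)

definition walks :: "real \<Rightarrow> real \<Rightarrow> int \<Rightarrow> nat \<Rightarrow> bool list set" where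
  "walks j0 j k n = {bs. length bs = n \<and> int (length (filter id bs)) = k \<and> walk_end j0 bs = j}"

lemma finite_walks: "finite (walks j0 j k n)"
  by (rule finite_subset[OF _ finite_lists_length_eq[of "UNIV :: bool set" n]])
     (auto simp: walks_def)

lemma Lambda_eq_card_walks: "Lambda j0 j k n = card (walks j0 j k n)"
  unfolding Lambda_def walks_def ..

lemma walks_Suc:
  "walks j0 j k (Suc n) =
     Cons True ` walks (j0 + 1) j (k - 1) n \<union> Cons False ` walks (max (j0 - 1) 0) j k n"
proof (rule set_eqI)
  fix bs
  show "bs \<in> walks j0 j k (Suc n) \<longleftrightarrow>
    bs \<in> Cons True ` walks (j0 + 1) j (k - 1) n \<union> Cons False ` walks (max (j0 - 1) 0) j k n"
    by (cases bs) (auto simp: walks_def walk_end_def walk_step_def)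
qed

lemma Lambda_Suc:
  "Lambda j0 j k (Suc n) = Lambda (j0 + 1) j (k - 1) n + Lambda (max (j0 - 1) 0) j k n"
proof -
  have "Cons True ` walks (j0 + 1) j (k - 1) n \<inter> Cons False ` walks (max (j0 - 1) 0) j k n = {}"
    by auto
  then show ?thesis
    by (simp add: Lambda_eq_card_walks walks_Suc card_Un_disjoint finite_walks card_image)
qed

lemma Lambda_0: "Lambda j0 j k 0 = (if j = j0 \<and> k = 0 then 1 else 0)"
proof -
  have "walks j0 j k 0 = (if j = j0 \<and> k = 0 then {[]} else {})"
    by (auto simp: walks_def walk_end_def)
  then show ?thesis
    by (simp add: Lambda_eq_card_walks)
qed

definition unreflected_count :: "real \<Rightarrow> real \<Rightarrow> int \<Rightarrow> nat \<Rightarrow> int" where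
  "unreflected_count j0 j k n =
     (if j = j0 + 2 * of_int k - real n \<and> 0 \<le> j then zbinom n k - zbinom n (k + \<lfloor>j0\<rfloor> + 1) else 0)"

definition reflected_count :: "int \<Rightarrow> real \<Rightarrow> int \<Rightarrow> nat \<Rightarrow> int" where
  "reflected_count a j k n =
     (if j \<in> \<int> \<and> 0 \<le> j \<and> 2 * k \<le> int n - a - 1 + \<lfloor>j\<rfloor>
      then zbinom n (k - \<lfloor>j\<rfloor>) - zbinom n (k - \<lfloor>j\<rfloor> - 1) else 0)"

definition Lambda_closed :: "real \<Rightarrow> real \<Rightarrow> int \<Rightarrow> nat \<Rightarrow> int" where
  "Lambda_closed j0 j k n = unreflected_count j0 j k n + reflected_count \<lfloor>j0\<rfloor> j k n"

lemma unreflected_count_Suc: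
  "unreflected_count j0 j k (Suc n) =
     unreflected_count (j0 + 1) j (k - 1) n + unreflected_count (j0 - 1) j k n"
proof -
  have "zbinom (Suc n) (k + \<lfloor>j0\<rfloor> + 1) =
      zbinom n (k - 1 + \<lfloor>j0 + 1\<rfloor> + 1) + zbinom n (k + \<lfloor>j0 - 1\<rfloor> + 1)"
    by (simp add: zbinom_Suc algebra_simps)
  then show ?thesis
    unfolding unreflected_count_def by (auto simp: zbinom_Suc[of n k] algebra_simps)
qed

lemma unreflected_count_floor_minus_one: "\<lfloor>j0\<rfloor> = -1 \<Longrightarrow> unreflected_count j0 j k n = 0"
  by (simp add: unreflected_count_def)

lemma reflected_count_Suc:
  "reflected_count a j k (Suc n) =
     reflected_count (a + 1) j (k - 1) n + reflected_count (a - 1) j k n"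
proof -
  have "zbinom (Suc n) (k - \<lfloor>j\<rfloor> - i) =
      zbinom n (k - 1 - \<lfloor>j\<rfloor> - i) + zbinom n (k - \<lfloor>j\<rfloor> - i)" for i
    by (simp add: zbinom_Suc algebra_simps)
  from this[of 0] this[of 1] show ?thesis
    unfolding reflected_count_def by (auto simp: algebra_simps)
qed

lemma reflected_count_minus_one:
  "reflected_count (-1) j k n = reflected_count 0 j k n + unreflected_count 0 j k n"
proof (cases "j \<in> \<int> \<and> 0 \<le> j \<and> 2 * k = int n + \<lfloor>j\<rfloor>")
  case True
  then obtain i where i: "j = of_int i" "0 \<le> i" "2 * k = int n + i"
    by (auto elim: Ints_cases)
  have "int n - k = k - i" "int n - (k + 1) = k - i - 1"
    using i(3) by simp_all
  then have "zbinom n k = zbinom n (k - i)" "zbinom n (k + 1) = zbinom n (k - i - 1)"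
    by (metis zbinom_symmetric)+
  with i show ?thesis
    unfolding reflected_count_def unreflected_count_def by simp
next
  case False
  have "\<not> (j = 2 * of_int k - real n \<and> 0 \<le> j)"
  proof
    assume j: "j = 2 * of_int k - real n \<and> 0 \<le> j"
    then have "j = of_int (2 * k - int n)"
      by simp
    then have "j \<in> \<int>" "\<lfloor>j\<rfloor> = 2 * k - int n"
      by (metis Ints_of_int, metis floor_of_int)
    with j False show False
      by simp
  qed
  with False show ?thesis
    unfolding reflected_count_def unreflected_count_def by auto
qed

lemma Lambda_closed_Suc:
  assumes "0 \<le> j0"
  shows "Lambda_closed j0 j k (Suc n) =
    Lambda_closed (j0 + 1) j (k - 1) n + Lambda_closed (max (j0 - 1) 0) j k n"
proof (cases "1 \<le> j0")
  case True
  then have "max (j0 - 1) 0 = j0 - 1" "\<lfloor>j0 + 1\<rfloor> = \<lfloor>j0\<rfloor> + 1" "\<lfloor>j0 - 1\<rfloor> = \<lfloor>j0\<rfloor> - 1"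
    by simp_all
  then show ?thesis
    unfolding Lambda_closed_def by (simp add: unreflected_count_Suc reflected_count_Suc)
next
  case False
  with assms have "\<lfloor>j0\<rfloor> = 0" "max (j0 - 1) 0 = 0"
    by (simp_all add: floor_eq_iff)
  then have "\<lfloor>j0 - 1\<rfloor> = -1" "\<lfloor>j0 + 1\<rfloor> = 1"
    by simp_all
  \<comment> \<open>The down step lands at 0, not at \<open>j0 - 1\<close>; but at \<open>j0 - 1\<close> the unreflected count
    vanishes and the reflected one is the whole closed form at 0.\<close>
  then show ?thesis
    unfolding Lambda_closed_def
    by (simp add: unreflected_count_Suc reflected_count_Suc unreflected_count_floor_minus_one
        reflected_count_minus_one \<open>\<lfloor>j0\<rfloor> = 0\<close> \<open>max (j0 - 1) 0 = 0\<close>)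
qed

lemma Lambda_closed_0:
  assumes "0 \<le> j0"
  shows "Lambda_closed j0 j k 0 = (if j = j0 \<and> k = 0 then 1 else 0)"
proof -
  have "0 \<le> \<lfloor>j0\<rfloor>" "j0 < of_int \<lfloor>j0\<rfloor> + 1"
    using assms by linarith+
  have "unreflected_count j0 j k 0 = (if j = j0 \<and> k = 0 then 1 else 0)"
  proof (cases "j = j0 + 2 * of_int k \<and> 0 \<le> j")
    case True
    have "k + \<lfloor>j0\<rfloor> + 1 \<noteq> 0"
    proof
      assume "k + \<lfloor>j0\<rfloor> + 1 = 0"
      then have "of_int k = - of_int \<lfloor>j0\<rfloor> - (1 :: real)"
        by linarith
      with True \<open>0 \<le> \<lfloor>j0\<rfloor>\<close> \<open>j0 < of_int \<lfloor>j0\<rfloor> + 1\<close> show False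
        by linarith
    qed
    with True show ?thesis
      unfolding unreflected_count_def by (auto simp: zbinom_0)
  qed (use assms in \<open>auto simp: unreflected_count_def\<close>)
  moreover have "k - \<lfloor>j\<rfloor> < 0" if "0 \<le> j" "2 * k \<le> - \<lfloor>j0\<rfloor> - 1 + \<lfloor>j\<rfloor>"
    using that \<open>0 \<le> \<lfloor>j0\<rfloor>\<close> by linarith
  then have "reflected_count \<lfloor>j0\<rfloor> j k 0 = 0"
    unfolding reflected_count_def by (auto simp: zbinom_eq_0)
  ultimately show ?thesis
    unfolding Lambda_closed_def by simp
qed

lemma Lambda_eq_Lambda_closed: "0 \<le> j0 \<Longrightarrow> int (Lambda j0 j k n) = Lambda_closed j0 j k n"
proof (induction n arbitrary: j0 k)
  case 0
  then show ?case
    by (simp add: Lambda_0 Lambda_closed_0)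
next
  case (Suc n)
  then show ?case
    by (simp add: Lambda_Suc Lambda_closed_Suc)
qed

lemma reflected_count_eq:
  "reflected_count a j k n =
    (if j \<in> \<int> \<and> 0 \<le> j \<and> j \<le> real n - of_int a - 1 \<and>
        of_int k \<ge> j \<and> k \<le> \<lfloor>(real n - of_int a - 1 + j) / 2\<rfloor>
     then zbinom n (k - \<lfloor>j\<rfloor>) - zbinom n (k - \<lfloor>j\<rfloor> - 1) else 0)"
proof (cases "j \<in> \<int> \<and> 0 \<le> j")
  case True
  then obtain i where i: "j = of_int i" "0 \<le> i"
    by (auto elim: Ints_cases)
  have "of_int (2 * k) \<le> (of_int (int n - a - 1 + i) :: real) \<longleftrightarrow> 2 * k \<le> int n - a - 1 + i"
    by (rule of_int_le_iff)
  then have "k \<le> \<lfloor>(real n - of_int a - 1 + j) / 2\<rfloor> \<longleftrightarrow> 2 * k \<le> int n - a - 1 + i"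
    by (simp add: le_floor_iff i(1) field_simps)
  moreover have "zbinom n (k - i) - zbinom n (k - i - 1) = 0" if "k < i"
    using that by (simp add: zbinom_eq_0)
  ultimately show ?thesis
    unfolding reflected_count_def using i by auto
qed (auto simp: reflected_count_def)

lemma unreflected_endpoint_exceeds_reflected_bound:
  assumes "j = j0 + 2 * of_int k - real n"
  shows "\<lfloor>(real n - of_int \<lfloor>j0\<rfloor> - 1 + j) / 2\<rfloor> < k"
  unfolding floor_less_iff
  using assms real_of_int_floor_add_one_gt[of j0] by (simp add: field_simps)

lemma unreflected_count_eq:
  assumes "0 \<le> j0"
  shows "unreflected_count j0 j k n =
    (if j = j0 + 2 * of_int k - real n \<and> int n - \<lfloor>j0\<rfloor> \<le> k \<and> k \<le> int n
       then zbinom n k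
     else if j = j0 + 2 * of_int k - real n \<and>
             int n - \<lfloor>(real n + j0) / 2\<rfloor> \<le> k \<and> k \<le> int n - \<lfloor>j0\<rfloor> - 1
       then zbinom n k - zbinom n (k + \<lfloor>j0\<rfloor> + 1)
     else 0)"
proof (cases "j = j0 + 2 * of_int k - real n")
  case True
  have "0 \<le> \<lfloor>j0\<rfloor>" "of_int \<lfloor>j0\<rfloor> \<le> j0" "j0 < of_int \<lfloor>j0\<rfloor> + 1"
    using assms by linarith+
  have nonneg_iff: "0 \<le> j \<longleftrightarrow> int n - \<lfloor>(real n + j0) / 2\<rfloor> \<le> k"
  proof -
    have "int n - \<lfloor>(real n + j0) / 2\<rfloor> \<le> k \<longleftrightarrow> int n - k \<le> \<lfloor>(real n + j0) / 2\<rfloor>"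
      by linarith
    also have "\<dots> \<longleftrightarrow> of_int (int n - k) \<le> (real n + j0) / 2"
      by (rule le_floor_iff)
    finally show ?thesis
      using True by (auto simp: field_simps)
  qed
  show ?thesis
  proof (cases "0 \<le> j")
    case False
    with True \<open>of_int \<lfloor>j0\<rfloor> \<le> j0\<close> have "int n - \<lfloor>j0\<rfloor> \<le> k \<Longrightarrow> k < 0"
      by linarith
    with True False nonneg_iff show ?thesis
      unfolding unreflected_count_def by (auto simp: zbinom_eq_0)
  next
    case nonneg: True
    then show ?thesis
      unfolding unreflected_count_def using True nonneg_iff \<open>0 \<le> \<lfloor>j0\<rfloor>\<close>
      by (auto simp: zbinom_eq_0)
  qed
qed (simp add: unreflected_count_def)

theorem lemma2p1:
  fixes j0 j :: real and k :: int and n :: nat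
  assumes "j0 \<ge> 0"
  shows "int (Lambda j0 j k n) =
    (if j = j0 + 2 * of_int k - real n \<and> int n - \<lfloor>j0\<rfloor> \<le> k \<and> k \<le> int n
       then zbinom n k
     else if j = j0 + 2 * of_int k - real n \<and>
             int n - \<lfloor>(real n + j0) / 2\<rfloor> \<le> k \<and> k \<le> int n - \<lfloor>j0\<rfloor> - 1
       then zbinom n k - zbinom n (k + \<lfloor>j0\<rfloor> + 1)
     else if j \<in> \<int> \<and> 0 \<le> j \<and> j \<le> real n - of_int \<lfloor>j0\<rfloor> - 1 \<and>
             of_int k \<ge> j \<and> k \<le> \<lfloor>(real n - of_int \<lfloor>j0\<rfloor> - 1 + j) / 2\<rfloor>
       then zbinom n (k - \<lfloor>j\<rfloor>) - zbinom n (k - \<lfloor>j\<rfloor> - 1)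
     else 0)"
proof -
  have "int (Lambda j0 j k n) = unreflected_count j0 j k n + reflected_count \<lfloor>j0\<rfloor> j k n"
    using Lambda_eq_Lambda_closed[OF assms] by (simp add: Lambda_closed_def)
  with unreflected_endpoint_exceeds_reflected_bound[of j j0 k n] show ?thesis
    unfolding unreflected_count_eq[OF assms] reflected_count_eq by auto
qed

end
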